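(* Let $n\ge3$, $1<k<n/2$, $p>\frac{nk}{n-2k}$, and let $u$ be a regular solution of (1.6). Then $u'(r)<0$ for all $r>0$, $u(r)\to0$ as $r\to\infty$, and there are constants $C_1,C_2>0$ such that for all sufficiently large $r$, $$C_1r^{-\frac{n-2k}{k}}\le u(r)\le C_2r^{-\frac{2k}{p-k}}.$$
   Context: Problem (1.6) is: given $\rho>0$, find $u$ with $-\tfrac{1}{k}C_{n-1}^{k-1}(r^{n-k}|u'|^{k-1}u')'=r^{n-1}u^{p}$, $u(r)>0$ for all $r>0$, $u'(0)=0$, $u(0)=\rho$, where $C_{n-1}^{k-1}$ is the binomial coefficient. A solution $u$ of (1.6) is regular if $x\mapsto u(|x|)$ belongs to $C^2(\mathbb{R}^n)$. *)

theory Defs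
  imports "HOL-Analysis.Analysis"
begin

definition C2_UNIV :: "('a::euclidean_space \<Rightarrow> real) \<Rightarrow> bool" where
  "C2_UNIV f \<longleftrightarrow> (\<exists>(f1 :: 'a \<Rightarrow> ('a \<Rightarrow>\<^sub>L real)) (f2 :: 'a \<Rightarrow> ('a \<Rightarrow>\<^sub>L ('a \<Rightarrow>\<^sub>L real))).
      (\<forall>x. (f has_derivative blinfun_apply (f1 x)) (at x)) \<and>
      (\<forall>x. (f1 has_derivative blinfun_apply (f2 x)) (at x)) \<and>
      continuous_on UNIV f2)"

definition solves_1_6 :: "nat \<Rightarrow> nat \<Rightarrow> real \<Rightarrow> real \<Rightarrow> (real \<Rightarrow> real) \<Rightarrow> bool" where
  "solves_1_6 n k p \<rho> u \<longleftrightarrow>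
     (\<forall>r>0. u r > 0) \<and> u 0 = \<rho> \<and>
     (u has_real_derivative 0) (at 0 within {0..}) \<and>
     (\<forall>r>0. u differentiable (at r) \<and>
        ((\<lambda>s. s ^ (n - k) * \<bar>deriv u s\<bar> ^ (k - 1) * deriv u s) has_real_derivative
          (- (real k / real (n - 1 choose (k - 1))) * r ^ (n - 1) * u r powr p)) (at r))"

definition regular_solution_1_6 ::
    "'n::finite itself \<Rightarrow> nat \<Rightarrow> real \<Rightarrow> real \<Rightarrow> (real \<Rightarrow> real) \<Rightarrow> bool" where
  "regular_solution_1_6 TYPE('n) k p \<rho> u \<longleftrightarrow>
     solves_1_6 CARD('n) k p \<rho> u \<and> C2_UNIV (\<lambda>x::real^'n. u (norm x))"

end

theory Submission
  imports Defs
begin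

text \<open>
  Write \<open>w = r^(n-k) |u'|^(k-1) u'\<close> for the flux, so that (1.6) reads \<open>w' = -c r^(n-1) u^p\<close>
  with \<open>c > 0\<close>, and \<open>w\<close> is strictly decreasing. If \<open>w\<close> were ever \<open>\<ge> 0\<close>, it would be bounded
  below by a positive constant near \<open>0\<close>, forcing \<open>u'\<close> to blow up at least like \<open>r^(-(n-k)/k)\<close>
  there, which is incompatible with continuity of \<open>u\<close> at \<open>0\<close>; hence \<open>u' < 0\<close>.
  Then \<open>w + (c/n) r^n u^p\<close> is nonincreasing and tends to \<open>0\<close> at \<open>0\<close>, which gives
  \<open>|u'| \<ge> b r u^(p/k)\<close>; integrating this for \<open>u^(-m)\<close>, \<open>m = (p-k)/k\<close>, yields
  \<open>u \<le> C2 r^(-2k/(p-k))\<close>, and in particular \<open>u \<rightarrow> 0\<close>.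
  Conversely \<open>w(r) \<le> w(1) < 0\<close> for \<open>r \<ge> 1\<close> gives \<open>|u'| \<ge> \<gamma> r^(-(n-k)/k)\<close>, and integrating from
  \<open>r\<close> to \<open>\<infinity>\<close> gives the lower bound.
\<close>

lemma powr_divide_power:
  fixes x a :: real
  assumes "0 < x" "0 < k"
  shows "(x powr (a / real k)) ^ k = x powr a"
  using assms by (simp add: powr_power)

definition flux :: "nat \<Rightarrow> nat \<Rightarrow> (real \<Rightarrow> real) \<Rightarrow> real \<Rightarrow> real" where
  "flux n k u r = r ^ (n - k) * \<bar>deriv u r\<bar> ^ (k - 1) * deriv u r"

locale radial_hessian_solution =
  fixes n k :: nat and c p :: real and u :: "real \<Rightarrow> real"
  assumes one_less_k: "1 < k" and double_k_less_n: "2 * k < n"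
    and c_pos: "0 < c" and k_less_p: "real k < p"
    and pos: "\<And>r. 0 < r \<Longrightarrow> 0 < u r"
    and continuous_at_0: "continuous (at 0 within {0..}) u"
    and differentiable: "\<And>r. 0 < r \<Longrightarrow> u differentiable (at r)"
    and flux_deriv:
      "\<And>r. 0 < r \<Longrightarrow> (flux n k u has_real_derivative - c * r ^ (n - 1) * u r powr p) (at r)"
begin

lemma has_real_derivative_deriv: "0 < r \<Longrightarrow> (u has_real_derivative deriv u r) (at r)"
  using differentiable DERIV_deriv_iff_real_differentiable by blast

lemma tendsto_at_right_0: "(u \<longlongrightarrow> u 0) (at_right 0)"
  using continuous_at_0 by (auto simp: continuous_within intro: tendsto_within_subset)

lemma continuous_on_atLeastAtMost_0: "continuous_on {0..r} u"
  unfolding continuous_on_eq_continuous_within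
proof
  fix x assume "x \<in> {0..r}"
  show "continuous (at x within {0..r}) u"
  proof (cases "x = 0")
    case True
    then show ?thesis using continuous_within_subset[OF continuous_at_0] by auto
  next
    case False
    then show ?thesis using \<open>x \<in> {0..r}\<close> differentiable[of x]
      by (auto intro: differentiable_imp_continuous_within differentiable_at_withinI)
  qed
qed

lemma flux_strict_decreasing:
  assumes "0 < a" "a < b"
  shows "flux n k u b < flux n k u a"
proof (rule DERIV_neg_imp_decreasing[OF \<open>a < b\<close>])
  fix x assume "a \<le> x" "x \<le> b"
  then have "0 < x" using assms by linarith
  then show "\<exists>y. (flux n k u has_real_derivative y) (at x) \<and> y < 0"
    using flux_deriv c_pos pos[of x] by (intro exI[of _ "- c * x ^ (n - 1) * u x powr p"]) simp
qed

lemma deriv_neg: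
  assumes "0 < r"
  shows "deriv u r < 0"
proof (rule ccontr)
  assume "\<not> deriv u r < 0"
  define a where "a = flux n k u (r / 2)"
  have "0 \<le> flux n k u r"
    unfolding flux_def using \<open>0 < r\<close> \<open>\<not> deriv u r < 0\<close> by simp
  then have "0 < a"
    unfolding a_def using flux_strict_decreasing[of "r / 2" r] \<open>0 < r\<close> by linarith
  have steep: "0 < deriv u x \<and> a < x ^ (n - k) * deriv u x ^ k" if "0 < x" "x < r / 2" for x
  proof -
    have "a < flux n k u x"
      unfolding a_def using flux_strict_decreasing that by blast
    moreover have "0 < deriv u x"
    proof (rule ccontr)
      assume "\<not> 0 < deriv u x"
      then have "flux n k u x \<le> 0"
        unfolding flux_def using \<open>0 < x\<close> by (simp add: mult_nonneg_nonpos)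
      then show False using \<open>a < flux n k u x\<close> \<open>0 < a\<close> by linarith
    qed
    moreover from this have "flux n k u x = x ^ (n - k) * deriv u x ^ k"
      using one_less_k by (simp add: flux_def mult.assoc power_Suc2[symmetric])
    ultimately show ?thesis by simp
  qed
  have lim: "((\<lambda>y. (u y - u 0) ^ k) \<longlongrightarrow> (u 0 - u 0) ^ k) (at_right 0)"
    by (intro tendsto_intros tendsto_at_right_0)
  then have "\<forall>\<^sub>F y in at_right 0. (u y - u 0) ^ k < a"
    using order_tendstoD(2)[OF lim, of a] \<open>0 < a\<close> one_less_k by (simp add: zero_power)
  moreover have "\<forall>\<^sub>F y in at_right 0. a < (u y - u 0) ^ k"
    unfolding eventually_at_right_field
  proof (intro exI[of _ "min (r / 2) 1"] conjI allI impI)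
    fix y :: real assume y: "0 < y" "y < min (r / 2) 1"
    obtain l z where z: "0 < z" "z < y" "(u has_real_derivative l) (at z)"
      and mvt: "u y - u 0 = (y - 0) * l"
      using MVT[OF y(1) continuous_on_atLeastAtMost_0] differentiable by force
    have "l = deriv u z" using DERIV_unique[OF z(3) has_real_derivative_deriv[OF z(1)]] .
    have "z ^ (n - k) \<le> y ^ (n - k)" using z by (intro power_mono) auto
    also have "\<dots> \<le> y ^ k" using y double_k_less_n by (intro power_decreasing) auto
    finally have "z ^ (n - k) * deriv u z ^ k \<le> y ^ k * deriv u z ^ k"
      using steep[of z] z y by (intro mult_right_mono) auto
    also have "\<dots> = (u y - u 0) ^ k"
      using mvt \<open>l = deriv u z\<close> by (simp add: power_mult_distrib)
    finally show "a < (u y - u 0) ^ k"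
      using steep[of z] z y by simp
  qed (use \<open>0 < r\<close> in simp)
  ultimately have "\<forall>\<^sub>F y in at_right (0::real). False"
    by eventually_elim simp
  then show False by simp
qed

lemma flux_eq_neg_power:
  assumes "0 < r"
  shows "flux n k u r = - (r ^ (n - k) * \<bar>deriv u r\<bar> ^ k)"
proof -
  have "\<bar>deriv u r\<bar> ^ (k - 1) * deriv u r = - (\<bar>deriv u r\<bar> ^ (k - 1) * \<bar>deriv u r\<bar>)"
    using deriv_neg[OF assms] by simp
  also have "\<bar>deriv u r\<bar> ^ (k - 1) * \<bar>deriv u r\<bar> = \<bar>deriv u r\<bar> ^ k"
    using one_less_k by (simp add: power_Suc2[symmetric])
  finally show ?thesis unfolding flux_def by (simp add: mult.assoc)
qed

lemma energy_nonpos: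
  assumes "0 < r"
  shows "flux n k u r + c / n * r ^ n * u r powr p \<le> 0"
proof -
  define E where "E s = flux n k u s + c / n * s ^ n * u s powr p" for s
  have "0 < p" using k_less_p by linarith
  have E_deriv: "(E has_real_derivative c / n * x ^ n * (p * u x powr (p - 1) * deriv u x)) (at x)"
    if "0 < x" for x
  proof -
    have "((\<lambda>s. s ^ n) has_real_derivative n * x ^ (n - 1)) (at x)"
      using DERIV_pow[of n x] by simp
    note powers = DERIV_mult[OF DERIV_cmult[OF this, of "c / n"]
        DERIV_fun_powr[OF has_real_derivative_deriv[OF that] pos[OF that], of p]]
    show ?thesis
      unfolding E_def using double_k_less_n
      by (intro DERIV_cong[OF DERIV_add[OF flux_deriv[OF that] powers]]) (simp add: field_simps)
  qed
  \<comment> \<open>\<open>E\<close> is nonincreasing and the flux is negative, so \<open>E r\<close> lies below the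
    potential term, which vanishes at \<open>0\<close>.\<close>
  have ev: "\<forall>\<^sub>F s in at_right 0. E r \<le> c / n * s ^ n * u s powr p"
    unfolding eventually_at_right_field
  proof (intro exI[of _ r] conjI allI impI)
    fix s :: real assume s: "0 < s" "s < r"
    have "E r \<le> E s"
    proof (rule DERIV_nonpos_imp_nonincreasing[of s r])
      fix x assume "s \<le> x" "x \<le> r"
      then have "0 < x" using s by linarith
      have "c / n * x ^ n * (p * u x powr (p - 1) * deriv u x) \<le> 0"
        using c_pos \<open>0 < p\<close> \<open>0 < x\<close> deriv_neg[OF \<open>0 < x\<close>]
        by (intro mult_nonneg_nonpos mult_nonneg_nonpos) auto
      then show "\<exists>y. (E has_real_derivative y) (at x) \<and> y \<le> 0"
        using E_deriv[OF \<open>0 < x\<close>] by blast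
    qed (use s in simp)
    moreover have "flux n k u s < 0" using flux_eq_neg_power[OF s(1)] s(1) deriv_neg[OF s(1)] by simp
    ultimately show "E r \<le> c / n * s ^ n * u s powr p" unfolding E_def by simp
  qed (use assms in simp)
  have lim: "((\<lambda>s. c / n * s ^ n * u s powr p) \<longlongrightarrow> c / n * 0 ^ n * u 0 powr p) (at_right 0)"
    using \<open>0 < p\<close> pos
    by (intro tendsto_intros tendsto_at_right_0 tendsto_powr')
      (auto simp: eventually_at_right_field intro: exI[of _ 1] less_imp_le)
  have "E r \<le> c / n * 0 ^ n * u 0 powr p"
    by (rule tendsto_le[OF trivial_limit_at_right_real lim tendsto_const ev])
  then show ?thesis using double_k_less_n unfolding E_def by (simp add: zero_power)
qed

lemma abs_deriv_ge:
  assumes "0 < r"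
  shows "(c / n) powr (1 / k) * r * u r powr (p / k) \<le> \<bar>deriv u r\<bar>"
proof -
  have "r ^ (n - k) * (c / n * r ^ k * u r powr p) \<le> r ^ (n - k) * \<bar>deriv u r\<bar> ^ k"
  proof -
    have "r ^ n = r ^ (n - k) * r ^ k"
      using double_k_less_n by (simp add: power_add[symmetric])
    then show ?thesis
      using energy_nonpos[OF assms] flux_eq_neg_power[OF assms] by (simp add: mult_ac)
  qed
  then have "c / n * r ^ k * u r powr p \<le> \<bar>deriv u r\<bar> ^ k"
    by (rule mult_left_le_imp_le) (use assms in simp)
  moreover have "((c / n) powr (1 / k) * r * u r powr (p / k)) ^ k = c / n * r ^ k * u r powr p"
    using powr_divide_power[of "c / n" k 1] powr_divide_power[of "u r" k p] c_pos pos[OF assms]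
      one_less_k double_k_less_n
    by (simp add: power_mult_distrib)
  ultimately have "((c / n) powr (1 / k) * r * u r powr (p / k)) ^ k \<le> \<bar>deriv u r\<bar> ^ k"
    by simp
  then show ?thesis
    using power_mono_iff[of "(c / n) powr (1 / k) * r * u r powr (p / k)" "\<bar>deriv u r\<bar>" k]
      assms one_less_k by simp
qed

lemma powr_neg_ge_square_at_top: "\<exists>\<beta>>0. \<forall>r\<ge>2. \<beta> * r\<^sup>2 \<le> u r powr (- ((p - k) / k))"
proof -
  define b where "b = (c / n) powr (1 / k)"
  define m where "m = (p - k) / k"
  have "0 < b" "0 < m" unfolding b_def m_def using c_pos k_less_p one_less_k double_k_less_n by auto
  define \<phi> where "\<phi> s = u s powr (- m) - b * m / 2 * s\<^sup>2" for s
  have \<phi>_deriv: "\<exists>y. (\<phi> has_real_derivative y) (at s) \<and> 0 \<le> y" if "0 < s" for s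
  proof -
    note h = DERIV_diff[OF DERIV_fun_powr[OF has_real_derivative_deriv[OF that] pos[OF that], of "- m"]
        DERIV_cmult[OF DERIV_pow[of 2 s], of "b * m / 2"]]
    have "u s powr (- m - 1) * (b * s * u s powr (p / k)) = b * s * u s powr (- m - 1 + p / k)"
      using pos[OF that] by (simp add: powr_add)
    also have "- m - 1 + p / k = 0" unfolding m_def using one_less_k by (simp add: field_simps)
    finally have "b * s = u s powr (- m - 1) * (b * s * u s powr (p / k))"
      using pos[OF that] by simp
    also have "\<dots> \<le> u s powr (- m - 1) * (- deriv u s)"
      using abs_deriv_ge[OF that] deriv_neg[OF that] unfolding b_def
      by (intro mult_left_mono) (auto simp: mult.assoc)
    finally have "m * (b * s) \<le> m * (u s powr (- m - 1) * (- deriv u s))"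
      using \<open>0 < m\<close> by (intro mult_left_mono) auto
    then have "0 \<le> - m * u s powr (- m - 1) * deriv u s - b * m * s"
      by (simp add: algebra_simps)
    moreover have "(\<phi> has_real_derivative - m * u s powr (- m - 1) * deriv u s - b * m * s) (at s)"
      unfolding \<phi>_def by (rule DERIV_cong[OF h]) simp
    ultimately show ?thesis by blast
  qed
  have "b * m / 4 * r\<^sup>2 \<le> u r powr (- m)" if "2 \<le> r" for r
  proof -
    have "\<phi> 1 \<le> \<phi> r"
      by (rule DERIV_nonneg_imp_nondecreasing) (use that \<phi>_deriv in auto)
    then have "u 1 powr (- m) + b * m / 2 * (r\<^sup>2 - 1) \<le> u r powr (- m)"
      unfolding \<phi>_def by (simp add: right_diff_distrib)
    moreover have "4 \<le> r\<^sup>2" using power_mono[OF that, of 2] by simp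
    then have "b * m / 4 * r\<^sup>2 \<le> b * m / 2 * (r\<^sup>2 - 1)"
      using \<open>0 < b\<close> \<open>0 < m\<close> by (simp add: field_simps)
    moreover have "0 \<le> u 1 powr (- m)" by simp
    ultimately show ?thesis by linarith
  qed
  then show ?thesis
    using \<open>0 < b\<close> \<open>0 < m\<close> unfolding m_def[symmetric] by (intro exI[of _ "b * m / 4"]) auto
qed

lemma upper_bound: "\<exists>C>0. \<forall>r\<ge>2. u r \<le> C * r powr (- (2 * real k / (p - real k)))"
proof -
  define m where "m = (p - k) / k"
  have "0 < m" unfolding m_def using k_less_p one_less_k by auto
  obtain \<beta> where "0 < \<beta>" and \<beta>: "\<And>r. 2 \<le> r \<Longrightarrow> \<beta> * r\<^sup>2 \<le> u r powr (- m)"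
    using powr_neg_ge_square_at_top unfolding m_def by auto
  have "u r \<le> \<beta> powr (- 1 / m) * r powr (- (2 * real k / (p - real k)))" if "2 \<le> r" for r
  proof -
    have "0 < r" using that by simp
    have "u r = (u r powr (- m)) powr (- 1 / m)"
      using \<open>0 < m\<close> pos[OF \<open>0 < r\<close>] by (simp add: powr_powr)
    also have "\<dots> \<le> (\<beta> * r\<^sup>2) powr (- 1 / m)"
      using \<beta>[OF that] \<open>0 < m\<close> \<open>0 < \<beta>\<close> \<open>0 < r\<close> by (intro powr_mono2') auto
    also have "\<dots> = \<beta> powr (- 1 / m) * (r powr 2) powr (- 1 / m)"
      using \<open>0 < \<beta>\<close> \<open>0 < r\<close> powr_realpow[of r 2] by (simp add: powr_mult)
    also have "\<dots> = \<beta> powr (- 1 / m) * r powr (2 * (- 1 / m))"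
      by (simp add: powr_powr)
    also have "2 * (- 1 / m) = - (2 * real k / (p - real k))"
      unfolding m_def using k_less_p one_less_k by (simp add: field_simps)
    finally show ?thesis .
  qed
  then show ?thesis using \<open>0 < \<beta>\<close> by (intro exI[of _ "\<beta> powr (- 1 / m)"]) auto
qed

lemma tendsto_zero_at_top: "(u \<longlongrightarrow> 0) at_top"
proof -
  obtain C where C: "\<And>r. 2 \<le> r \<Longrightarrow> u r \<le> C * r powr (- (2 * real k / (p - real k)))"
    using upper_bound by blast
  have "((\<lambda>r. C * r powr (- (2 * real k / (p - real k)))) \<longlongrightarrow> C * 0) at_top"
    using k_less_p one_less_k by (intro tendsto_intros tendsto_neg_powr filterlim_ident) simp
  moreover have "\<forall>\<^sub>F r in at_top. 0 \<le> u r"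
    using eventually_gt_at_top[of 0] by eventually_elim (use pos in \<open>auto intro: less_imp_le\<close>)
  moreover have "\<forall>\<^sub>F r in at_top. u r \<le> C * r powr (- (2 * real k / (p - real k)))"
    using eventually_ge_at_top[of 2] by eventually_elim (rule C)
  ultimately show ?thesis
    by (intro tendsto_sandwich[of "\<lambda>_. 0" u at_top "\<lambda>r. C * r powr _"]) auto
qed

lemma abs_deriv_ge_at_top:
  "\<exists>\<gamma>>0. \<forall>r\<ge>1. \<gamma> * r powr (- ((real n - real k) / k)) \<le> \<bar>deriv u r\<bar>"
proof -
  define a where "a = - flux n k u 1"
  have "0 < a" unfolding a_def using flux_eq_neg_power[of 1] deriv_neg[of 1] by simp
  have "a powr (1 / k) * r powr (- ((real n - real k) / k)) \<le> \<bar>deriv u r\<bar>" if "1 \<le> r" for r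
  proof -
    have "0 < r" using that by simp
    have "flux n k u r \<le> flux n k u 1"
      using flux_strict_decreasing[of 1 r] that by (cases "r = 1") auto
    then have flux_bound: "a \<le> r ^ (n - k) * \<bar>deriv u r\<bar> ^ k"
      unfolding a_def using flux_eq_neg_power[OF \<open>0 < r\<close>] by simp
    have "(a powr (1 / k) * r powr (- ((real n - real k) / k))) ^ k = a * r powr (- (real n - real k))"
      using powr_divide_power[of a k 1] powr_divide_power[of r k "- (real n - real k)"]
        \<open>0 < a\<close> \<open>0 < r\<close> one_less_k by (simp add: power_mult_distrib minus_divide_left)
    also have "\<dots> \<le> r ^ (n - k) * r powr (- (real n - real k)) * \<bar>deriv u r\<bar> ^ k"
      using mult_right_mono[OF flux_bound, of "r powr (- (real n - real k))"] by (simp add: mult_ac)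
    also have "r ^ (n - k) * r powr (- (real n - real k)) = 1"
      using \<open>0 < r\<close> double_k_less_n by (simp add: of_nat_diff powr_add[symmetric] flip: powr_realpow)
    finally show ?thesis
      using power_mono_iff[of _ "\<bar>deriv u r\<bar>" k] one_less_k by simp
  qed
  then show ?thesis using \<open>0 < a\<close> by (intro exI[of _ "a powr (1 / k)"]) auto
qed

lemma lower_bound: "\<exists>C>0. \<forall>r\<ge>1. C * r powr (- ((real n - 2 * real k) / k)) \<le> u r"
proof -
  obtain \<gamma> where "0 < \<gamma>"
    and \<gamma>: "\<And>r. 1 \<le> r \<Longrightarrow> \<gamma> * r powr (- ((real n - real k) / k)) \<le> \<bar>deriv u r\<bar>"
    using abs_deriv_ge_at_top by auto
  define e where "e = (real n - 2 * real k) / k"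
  have "0 < e" unfolding e_def using double_k_less_n one_less_k by simp
  have e_succ: "- e - 1 = - ((real n - real k) / k)"
    unfolding e_def using one_less_k by (simp add: field_simps)
  define C where "C = \<gamma> / (2 * e)"
  \<comment> \<open>Halving \<open>\<gamma>\<close> makes the derivative of \<open>u - C r\<^sup>-\<^sup>e\<close> strictly negative.\<close>
  have "C * r powr (- e) < u r" if "1 \<le> r" for r
  proof -
    have "0 < u r - C * r powr (- e)"
    proof (rule DERIV_neg_imp_decreasing_at_top[where f = "\<lambda>s. u s - C * s powr (- e)"])
      fix x assume "r \<le> x"
      then have "0 < x" "1 \<le> x" using that by auto
      have "((\<lambda>s. u s - C * s powr (- e)) has_real_derivative
          deriv u x - C * (- e * x powr (- e - 1))) (at x)"
        using \<open>0 < x\<close>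
        by (intro DERIV_diff DERIV_cmult has_real_derivative_deriv has_real_derivative_powr)
      moreover have "deriv u x - C * (- e * x powr (- e - 1)) < 0"
        using \<gamma>[OF \<open>1 \<le> x\<close>] deriv_neg[OF \<open>0 < x\<close>] \<open>0 < \<gamma>\<close> \<open>0 < e\<close> \<open>0 < x\<close>
        unfolding C_def e_succ by simp
      ultimately show "\<exists>y. ((\<lambda>s. u s - C * s powr (- e)) has_real_derivative y) (at x) \<and> y < 0"
        by blast
    next
      have "((\<lambda>s. s powr (- e)) \<longlongrightarrow> 0) at_top"
        using \<open>0 < e\<close> by (intro tendsto_neg_powr filterlim_ident) simp
      then show "((\<lambda>s. u s - C * s powr (- e)) \<longlongrightarrow> 0) at_top"
        using tendsto_diff[OF tendsto_zero_at_top tendsto_mult_right_zero] by fastforce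
    qed
    then show ?thesis by simp
  qed
  then show ?thesis
    using \<open>0 < \<gamma>\<close> \<open>0 < e\<close> unfolding e_def[symmetric] C_def
    by (intro exI[of _ "\<gamma> / (2 * e)"]) (auto intro: less_imp_le)
qed

end

lemma k_less_of_nk_div_less:
  fixes n k :: nat and p :: real
  assumes "0 < k" "2 * k < n" "real n * real k / (real n - 2 * real k) < p"
  shows "real k < p"
proof -
  have "real k * (real n - 2 * real k) < real n * real k"
    using assms(1) by (simp add: algebra_simps)
  moreover have "0 < real n - 2 * real k"
    using assms(2) by simp
  ultimately have "real k < real n * real k / (real n - 2 * real k)"
    by (simp add: less_divide_eq)
  then show ?thesis
    using assms(3) by linarith
qed

theorem lemma2p1:
  fixes u :: "real \<Rightarrow> real" and n k :: nat and p \<rho> :: real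
  assumes "CARD('n::finite) = n" and "n \<ge> 3" and "1 < k" and "real k < real n / 2"
    and "p > real n * real k / (real n - 2 * real k)" and "\<rho> > 0"
    and "regular_solution_1_6 TYPE('n) k p \<rho> u"
  shows "(\<forall>r>0. deriv u r < 0) \<and> (u \<longlongrightarrow> 0) at_top \<and>
    (\<exists>C1 C2. C1 > 0 \<and> C2 > 0 \<and>
      (\<forall>\<^sub>F r in at_top. C1 * r powr (- ((real n - 2 * real k) / real k)) \<le> u r \<and>
                         u r \<le> C2 * r powr (- (2 * real k / (p - real k)))))"
proof -
  have sol: "solves_1_6 n k p \<rho> u"
    using assms(1,7) unfolding regular_solution_1_6_def by simp
  have "2 * k < n" using assms(4) by linarith
  interpret radial_hessian_solution n k "k / (n - 1 choose (k - 1))" p u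
  proof
    show "real k < p" using k_less_of_nk_div_less \<open>2 * k < n\<close> assms(3,5) by simp
    show "continuous (at 0 within {0..}) u"
      using sol unfolding solves_1_6_def by (blast intro: DERIV_continuous)
  qed (use sol assms(3) \<open>2 * k < n\<close> in \<open>auto simp: solves_1_6_def flux_def[abs_def]\<close>)
  obtain C1 where "0 < C1"
    and lower: "\<And>r. 1 \<le> r \<Longrightarrow> C1 * r powr (- ((real n - 2 * real k) / k)) \<le> u r"
    using lower_bound by blast
  obtain C2 where "0 < C2"
    and upper: "\<And>r. 2 \<le> r \<Longrightarrow> u r \<le> C2 * r powr (- (2 * real k / (p - real k)))"
    using upper_bound by blast
  have "\<forall>\<^sub>F r in at_top. C1 * r powr (- ((real n - 2 * real k) / k)) \<le> u r \<and>
      u r \<le> C2 * r powr (- (2 * real k / (p - real k)))"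
    using eventually_ge_at_top[of 2] by eventually_elim (simp add: lower upper)
  then show ?thesis
    using deriv_neg tendsto_zero_at_top \<open>0 < C1\<close> \<open>0 < C2\<close> by blast
qed

end
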